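(* Let $n\geqslant2$, $\lambda>0$, distinct points $p_1,\ldots,p_M\in\mathbb{Z}^n$ and positive integers $n_1,\ldots,n_M$ be given, and let $g=4\pi\sum_{j=1}^Mn_j\delta_{p_j}$. Let $\Omega_0\subset\mathbb{Z}^n$ be a finite set containing $\{p_j\}_{j=1}^M$ and let $\Omega$ be a finite connected subset with $\Omega_0\subset\Omega$. Fix $K>2\lambda$, let $u_0=0$ and for $k\geqslant1$ let $u_k:\overline\Omega\to\mathbb{R}$ be the (unique) solution of $$(\Delta-K)u_k=\lambda e^{u_{k-1}}(e^{u_{k-1}}-1)+g-Ku_{k-1}\ \text{ on }\Omega,\qquad u_k=0\ \text{ on }\delta\Omega,$$ and let $u_\Omega=\lim_{k\to\infty}u_k$ (pointwise limit, which exists and is finite). Then for any function $V:\overline\Omega\to\mathbb{R}$ satisfying $$\Delta V\geqslant\lambda e^V(e^V-1)+g\ \text{ on }\Omega,\qquad V\leqslant0\ \text{ on }\delta\Omega,$$ we have $0=u_0\geqslant u_1\geqslant\cdots\geqslant u_k\geqslant\cdots\geqslant u_\Omega\geqslant V$ on $\overline\Omega$.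
   Context: $\mathbb{Z}^n$ is the integer lattice graph with $x\sim y$ iff $\sum_i|x_i-y_i|=1$. For a finite $\Omega\subset\mathbb{Z}^n$, $\delta\Omega=\{y\in\mathbb{Z}^n\setminus\Omega:\exists x\in\Omega,\ y\sim x\}$ and $\overline\Omega=\Omega\cup\delta\Omega$. For $u:\overline\Omega\to\mathbb{R}$ and $x\in\Omega$, $\Delta u(x)=\sum_{y\sim x}(u(y)-u(x))$. $\delta_p$ is the function equal to $1$ at $p$ and $0$ elsewhere. *)

theory Defs
  imports "HOL-Analysis.Analysis"
begin

definition lat_adj :: "int ^ 'n \<Rightarrow> int ^ 'n \<Rightarrow> bool" where
  "lat_adj x y \<longleftrightarrow> (\<Sum>i\<in>UNIV. \<bar>x $ i - y $ i\<bar>) = 1"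

definition lat_bdry :: "(int ^ 'n) set \<Rightarrow> (int ^ 'n) set" where
  "lat_bdry \<Omega> = {y. y \<notin> \<Omega> \<and> (\<exists>x\<in>\<Omega>. lat_adj y x)}"

definition lat_closure :: "(int ^ 'n) set \<Rightarrow> (int ^ 'n) set" where
  "lat_closure \<Omega> = \<Omega> \<union> lat_bdry \<Omega>"

definition lat_lap :: "(int ^ 'n \<Rightarrow> real) \<Rightarrow> int ^ 'n \<Rightarrow> real" where
  "lat_lap u x = (\<Sum>y\<in>{y. lat_adj x y}. u y - u x)"

definition lat_connected :: "(int ^ 'n) set \<Rightarrow> bool" where
  "lat_connected \<Omega> \<longleftrightarrow>
     (\<forall>x\<in>\<Omega>. \<forall>y\<in>\<Omega>. (x, y) \<in> {(a, b). a \<in> \<Omega> \<and> b \<in> \<Omega> \<and> lat_adj a b}\<^sup>*)"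

end

theory Submission
  imports Defs
begin

text \<open>
  On a finite set the lattice Laplacian obeys a maximum principle, hence so does \<open>\<Delta> - K\<close>
  for \<open>K > 0\<close>. For \<open>K \<ge> 2\<lambda>\<close> the map \<open>t \<mapsto> \<lambda>e\<^sup>t(e\<^sup>t - 1) - K t\<close> is nonincreasing
  on \<open>(-\<infinity>, 0]\<close>, so one step of the iteration preserves the order between nonpositive
  functions and maps a subsolution below the next iterate. By induction
  \<open>V \<le> u\<^sub>k\<^sub>+\<^sub>1 \<le> u\<^sub>k \<le> 0\<close>, and each decreasing sequence \<open>u\<^sub>k(x)\<close>, being bounded below by
  \<open>V(x)\<close>, converges to a limit lying between \<open>V(x)\<close> and every \<open>u\<^sub>k(x)\<close>.
\<close>

lemma lat_adj_sym: "lat_adj x y \<longleftrightarrow> lat_adj y x"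
  unfolding lat_adj_def by (simp add: abs_minus_commute)

lemma lat_lap_diff: "lat_lap (\<lambda>x. a x - b x) x = lat_lap a x - lat_lap b x"
  unfolding lat_lap_def by (simp add: sum_subtractf[symmetric] algebra_simps)

lemma lat_lap_const [simp]: "lat_lap (\<lambda>_. c) x = 0"
  unfolding lat_lap_def by simp

lemma lat_max_principle:
  fixes w :: "int ^ 'n \<Rightarrow> real"
  assumes fin: "finite \<Omega>"
    and bdry: "\<forall>x\<in>lat_bdry \<Omega>. w x \<le> 0"
    and lap_pos: "\<forall>x\<in>\<Omega>. w x > 0 \<longrightarrow> lat_lap w x > 0"
  shows "\<forall>x\<in>\<Omega>. w x \<le> 0"
proof (rule ccontr)
  assume "\<not> ?thesis"
  then obtain z where z: "z \<in> \<Omega>" "w z > 0" by force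
  have "Max (w ` \<Omega>) \<in> w ` \<Omega>" using fin z(1) by (intro Max_in) auto
  then obtain x where x: "x \<in> \<Omega>" and x_Max: "w x = Max (w ` \<Omega>)" by auto
  have x_max: "w y \<le> w x" if "y \<in> \<Omega>" for y using fin that x_Max by simp
  have wx: "w x > 0" using x_max[OF z(1)] z(2) by simp
  have "lat_lap w x \<le> 0"
    unfolding lat_lap_def
  proof (rule sum_nonpos)
    fix y assume "y \<in> {y. lat_adj x y}"
    then have "lat_adj y x" by (simp add: lat_adj_sym)
    then have "y \<in> \<Omega> \<or> y \<in> lat_bdry \<Omega>" using x unfolding lat_bdry_def by blast
    then show "w y - w x \<le> 0" using x_max bdry wx by force
  qed
  with lap_pos x wx show False by force
qed

lemma lat_comparison:
  fixes a b :: "int ^ 'n \<Rightarrow> real"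
  assumes "finite \<Omega>"
    and bdry: "\<forall>x\<in>lat_bdry \<Omega>. a x \<le> b x"
    and "\<forall>x\<in>\<Omega>. a x > b x \<longrightarrow> lat_lap a x > lat_lap b x"
  shows "\<forall>x\<in>lat_closure \<Omega>. a x \<le> b x"
proof -
  have "\<forall>x\<in>\<Omega>. a x - b x \<le> 0"
    using lat_max_principle[of \<Omega> "\<lambda>x. a x - b x"] assms by (simp add: lat_lap_diff)
  with bdry show ?thesis by (auto simp: lat_closure_def)
qed

lemma lat_comparison_helmholtz:
  fixes a b :: "int ^ 'n \<Rightarrow> real"
  assumes "finite \<Omega>" and K: "K > 0"
    and "\<forall>x\<in>lat_bdry \<Omega>. a x \<le> b x"
    and helmholtz: "\<forall>x\<in>\<Omega>. lat_lap a x - K * a x \<ge> lat_lap b x - K * b x"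
  shows "\<forall>x\<in>lat_closure \<Omega>. a x \<le> b x"
proof (rule lat_comparison)
  show "\<forall>x\<in>\<Omega>. a x > b x \<longrightarrow> lat_lap a x > lat_lap b x"
  proof (intro ballI impI)
    fix x assume "x \<in> \<Omega>" and "a x > b x"
    moreover from K \<open>a x > b x\<close> have "K * b x < K * a x" by simp
    ultimately show "lat_lap a x > lat_lap b x" using helmholtz by fastforce
  qed
qed fact+

lemma exp_nonlinearity_shifted_antimono:
  fixes lam K s t :: real
  assumes "lam \<ge> 0" "2 * lam \<le> K" "s \<le> t" "t \<le> 0"
  shows "lam * exp t * (exp t - 1) - K * t \<le> lam * exp s * (exp s - 1) - K * s"
proof -
  have "exp (2 * t) * (1 + 2 * (s - t)) \<le> exp (2 * t) * exp (2 * (s - t))"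
    using exp_ge_add_one_self by (intro mult_left_mono) auto
  also have "\<dots> = exp (2 * s)" by (simp flip: exp_add)
  finally have "exp (2 * t) - exp (2 * s) \<le> 2 * (t - s) * exp (2 * t)"
    by (simp add: algebra_simps)
  also have "\<dots> \<le> 2 * (t - s)" using assms by (simp add: mult_left_le)
  finally have "lam * (exp (2 * t) - exp (2 * s)) \<le> lam * (2 * (t - s))"
    using assms(1) by (rule mult_left_mono)
  also have "\<dots> \<le> K * (t - s)"
    using mult_right_mono[of "2 * lam" K "t - s"] assms by (simp add: algebra_simps)
  finally have quad: "lam * (exp (2 * t) - exp (2 * s)) \<le> K * (t - s)" .
  have sq: "exp t * exp t = exp (2 * t)" "exp s * exp s = exp (2 * s)"
    by (simp_all flip: exp_add)
  have "lam * (exp t - exp s) \<ge> 0" using assms by simp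
  with quad sq show ?thesis by (simp add: algebra_simps)
qed

lemma lat_iteration_comparison:
  fixes a b \<alpha> \<beta> g :: "int ^ 'n \<Rightarrow> real"
  assumes "finite \<Omega>" and lam: "lam \<ge> 0" "K > 2 * lam"
    and sub: "\<forall>x\<in>\<Omega>. lat_lap a x - K * a x \<ge> lam * exp (\<alpha> x) * (exp (\<alpha> x) - 1) + g x - K * \<alpha> x"
    and super: "\<forall>x\<in>\<Omega>. lat_lap b x - K * b x \<le> lam * exp (\<beta> x) * (exp (\<beta> x) - 1) + g x - K * \<beta> x"
    and order: "\<forall>x\<in>\<Omega>. \<alpha> x \<le> \<beta> x \<and> \<beta> x \<le> 0"
    and "\<forall>x\<in>lat_bdry \<Omega>. a x \<le> b x"
  shows "\<forall>x\<in>lat_closure \<Omega>. a x \<le> b x"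
proof (rule lat_comparison_helmholtz)
  show "K > 0" using lam by simp
  show "\<forall>x\<in>\<Omega>. lat_lap a x - K * a x \<ge> lat_lap b x - K * b x"
  proof
    fix x assume x: "x \<in> \<Omega>"
    have "lam * exp (\<beta> x) * (exp (\<beta> x) - 1) - K * \<beta> x
        \<le> lam * exp (\<alpha> x) * (exp (\<alpha> x) - 1) - K * \<alpha> x"
      using order x lam by (intro exp_nonlinearity_shifted_antimono) auto
    then show "lat_lap a x - K * a x \<ge> lat_lap b x - K * b x"
      using sub super x by fastforce
  qed
qed fact+

lemma lat_subsolution_nonpos:
  fixes V g :: "int ^ 'n \<Rightarrow> real"
  assumes "finite \<Omega>" and lam: "lam > 0" and g_nonneg: "\<forall>x. g x \<ge> 0"
    and V_sub: "\<forall>x\<in>\<Omega>. lat_lap V x \<ge> lam * exp (V x) * (exp (V x) - 1) + g x"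
    and V_bdry: "\<forall>x\<in>lat_bdry \<Omega>. V x \<le> 0"
  shows "\<forall>x\<in>lat_closure \<Omega>. V x \<le> 0"
proof (rule lat_comparison)
  show "\<forall>x\<in>\<Omega>. V x > 0 \<longrightarrow> lat_lap V x > lat_lap (\<lambda>_. 0) x"
  proof (intro ballI impI)
    fix x assume x: "x \<in> \<Omega>" "V x > 0"
    then have "lam * exp (V x) * (exp (V x) - 1) > 0" using lam by simp
    moreover have "lam * exp (V x) * (exp (V x) - 1) + g x \<le> lat_lap V x"
      using V_sub x by blast
    ultimately show "lat_lap V x > lat_lap (\<lambda>_. 0) x" using g_nonneg[rule_format, of x] by simp
  qed
qed (use assms in simp_all)

lemma lat_iteration_monotone:
  fixes u :: "nat \<Rightarrow> int ^ 'n \<Rightarrow> real" and V g :: "int ^ 'n \<Rightarrow> real"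
  assumes fin: "finite \<Omega>" and lam: "lam > 0" "K > 2 * lam"
    and g_nonneg: "\<forall>x. g x \<ge> 0"
    and u0: "\<forall>x\<in>lat_closure \<Omega>. u 0 x = 0"
    and u_eq: "\<forall>k. \<forall>x\<in>\<Omega>. lat_lap (u (Suc k)) x - K * u (Suc k) x
                 = lam * exp (u k x) * (exp (u k x) - 1) + g x - K * u k x"
    and u_bdry: "\<forall>k. \<forall>x\<in>lat_bdry \<Omega>. u (Suc k) x = 0"
    and V_sub: "\<forall>x\<in>\<Omega>. lat_lap V x \<ge> lam * exp (V x) * (exp (V x) - 1) + g x"
    and V_bdry: "\<forall>x\<in>lat_bdry \<Omega>. V x \<le> 0"
  shows "\<forall>x\<in>lat_closure \<Omega>. V x \<le> u (Suc k) x \<and> u (Suc k) x \<le> u k x \<and> u k x \<le> 0"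
proof -
  have lam_nonneg: "lam \<ge> 0" using lam by simp
  have u_bdry_all: "\<forall>x\<in>lat_bdry \<Omega>. u k x = 0" for k
    using u0 u_bdry by (cases k) (auto simp: lat_closure_def)
  have u_sub: "\<forall>x\<in>\<Omega>. lat_lap (u (Suc k)) x - K * u (Suc k) x
      \<ge> lam * exp (u k x) * (exp (u k x) - 1) + g x - K * u k x" for k
    using u_eq by simp
  have u_super: "\<forall>x\<in>\<Omega>. lat_lap (u (Suc k)) x - K * u (Suc k) x
      \<le> lam * exp (u k x) * (exp (u k x) - 1) + g x - K * u k x" for k
    using u_eq by simp
  have V_sub': "\<forall>x\<in>\<Omega>. lat_lap V x - K * V x \<ge> lam * exp (V x) * (exp (V x) - 1) + g x - K * V x"
    using V_sub by auto
  have zero_super: "\<forall>x\<in>\<Omega>. lat_lap (\<lambda>_. 0) x - K * 0 \<le> lam * exp 0 * (exp 0 - 1) + g x - K * 0"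
    using g_nonneg by simp
  have "\<forall>x\<in>lat_closure \<Omega>. V x \<le> 0"
    using lat_subsolution_nonpos[OF fin lam(1) g_nonneg V_sub V_bdry] .
  then have V_nonpos: "\<forall>x\<in>\<Omega>. V x \<le> 0" by (simp add: lat_closure_def)
  show ?thesis
  proof (induction k)
    case 0
    have u0_\<Omega>: "\<forall>x\<in>\<Omega>. u 0 x = 0" using u0 by (simp add: lat_closure_def)
    have "\<forall>x\<in>lat_closure \<Omega>. u (Suc 0) x \<le> 0"
      by (rule lat_iteration_comparison[OF fin lam_nonneg lam(2) u_sub zero_super])
        (simp_all add: u0_\<Omega> u_bdry_all)
    moreover have "\<forall>x\<in>lat_closure \<Omega>. V x \<le> u (Suc 0) x"
      by (rule lat_iteration_comparison[OF fin lam_nonneg lam(2) V_sub' u_super])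
        (simp_all add: u0_\<Omega> V_nonpos u_bdry_all V_bdry)
    ultimately show ?case using u0 by simp
  next
    case (Suc k)
    then have order: "\<forall>x\<in>\<Omega>. u (Suc k) x \<le> u k x \<and> u k x \<le> 0"
      "\<forall>x\<in>\<Omega>. V x \<le> u (Suc k) x \<and> u (Suc k) x \<le> 0"
      by (auto simp: lat_closure_def intro: order_trans)
    have "\<forall>x\<in>lat_closure \<Omega>. u (Suc (Suc k)) x \<le> u (Suc k) x"
      by (rule lat_iteration_comparison[OF fin lam_nonneg lam(2) u_sub u_super order(1)])
        (simp add: u_bdry_all)
    moreover have "\<forall>x\<in>lat_closure \<Omega>. V x \<le> u (Suc (Suc k)) x"
      by (rule lat_iteration_comparison[OF fin lam_nonneg lam(2) V_sub' u_super order(2)])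
        (simp add: u_bdry_all V_bdry)
    moreover have "\<forall>x\<in>lat_closure \<Omega>. u (Suc k) x \<le> 0"
      using Suc.IH by (meson order_trans)
    ultimately show ?case by blast
  qed
qed

lemma decseq_bounded_below_lim:
  fixes X :: "nat \<Rightarrow> real"
  assumes "decseq X" and "\<forall>k. B \<le> X k"
  shows "convergent X \<and> (\<forall>k. lim X \<le> X k) \<and> B \<le> lim X"
proof -
  obtain L where L: "X \<longlonglongrightarrow> L" "\<forall>k. L \<le> X k"
    using decseq_convergent[OF assms] by blast
  moreover have "B \<le> L" using L(1) assms(2) by (intro LIMSEQ_le_const) auto
  moreover have "lim X = L" using L(1) by (rule limI)
  ultimately show ?thesis by (auto simp: convergent_def)
qed

theorem lemma3p3:
  fixes lam K :: real
    and M :: nat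
    and p :: "nat \<Rightarrow> int ^ 'n"
    and m :: "nat \<Rightarrow> nat"
    and g :: "int ^ 'n \<Rightarrow> real"
    and \<Omega>0 \<Omega> :: "(int ^ 'n) set"
    and u :: "nat \<Rightarrow> int ^ 'n \<Rightarrow> real"
    and V :: "int ^ 'n \<Rightarrow> real"
  assumes n2: "CARD('n) \<ge> 2"
    and lam_pos: "lam > 0"
    and p_distinct: "inj_on p {1..M}"
    and m_pos: "\<forall>j\<in>{1..M}. m j > 0"
    and g_def: "g = (\<lambda>x. 4 * pi * (\<Sum>j\<in>{1..M}. real (m j) * (if x = p j then 1 else 0)))"
    and Omega0_fin: "finite \<Omega>0"
    and Omega0_pts: "p ` {1..M} \<subseteq> \<Omega>0"
    and Omega_fin: "finite \<Omega>"
    and Omega_conn: "lat_connected \<Omega>"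
    and Omega0_sub: "\<Omega>0 \<subseteq> \<Omega>"
    and K_big: "K > 2 * lam"
    and u0: "\<forall>x\<in>lat_closure \<Omega>. u 0 x = 0"
    and u_eq: "\<forall>k. \<forall>x\<in>\<Omega>. lat_lap (u (Suc k)) x - K * u (Suc k) x
                 = lam * exp (u k x) * (exp (u k x) - 1) + g x - K * u k x"
    and u_bdry: "\<forall>k. \<forall>x\<in>lat_bdry \<Omega>. u (Suc k) x = 0"
    and V_sub: "\<forall>x\<in>\<Omega>. lat_lap V x \<ge> lam * exp (V x) * (exp (V x) - 1) + g x"
    and V_bdry: "\<forall>x\<in>lat_bdry \<Omega>. V x \<le> 0"
  shows "\<forall>x\<in>lat_closure \<Omega>.
           u 0 x = 0
         \<and> (\<forall>k. u (Suc k) x \<le> u k x)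
         \<and> convergent (\<lambda>k. u k x)
         \<and> (\<forall>k. lim (\<lambda>k. u k x) \<le> u k x)
         \<and> V x \<le> lim (\<lambda>k. u k x)"
proof -
  have "\<forall>x. g x \<ge> 0" unfolding g_def by (auto intro!: sum_nonneg mult_nonneg_nonneg)
  note mono = lat_iteration_monotone[OF Omega_fin lam_pos K_big this u0 u_eq u_bdry V_sub V_bdry]
  show ?thesis
  proof
    fix x assume x: "x \<in> lat_closure \<Omega>"
    have "decseq (\<lambda>k. u k x)" using mono x by (intro decseq_SucI) blast
    moreover have "V x \<le> u k x" for k
      using mono[of k] mono[of "k - 1"] x by (cases k) auto
    ultimately show "u 0 x = 0 \<and> (\<forall>k. u (Suc k) x \<le> u k x) \<and> convergent (\<lambda>k. u k x)
        \<and> (\<forall>k. lim (\<lambda>k. u k x) \<le> u k x) \<and> V x \<le> lim (\<lambda>k. u k x)"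
      using decseq_bounded_below_lim[of "\<lambda>k. u k x" "V x"] u0 mono x by blast
  qed
qed

end
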